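(* Let $L\ge 1$ and $n\ge0$ be integers. Let $\tilde A_{L,0}(n)$ be the number of partitions $\pi$ of $n$ into parts congruent to $\pm1\pmod 8$ with largest part at most $8L-1$, such that $\nu(\pi,1)\ge\nu(\pi,7)$ and, writing $D=\nu(\pi,1)-\nu(\pi,7)$, at least one of the following holds: (i) $3\mid D$ and $\mu(\pi,1)\ge \tfrac23 D$; (ii) $5\mid D$, $3\nmid D$, and $\mu(\pi,1)\ge\tfrac45 D$; (iii) $D\equiv -8\pmod{15}$, $\mu(\pi,7)>0$, and $\mu(\pi,1)\ge\tfrac15(4D-3)$. Then $\tilde A_{L,0}(n)=A_{L,1}(n)$, where $A_{L,1}(n)$ is the number of partitions of $n$ into parts congruent to $\pm3\pmod 8$ with largest part at most $8L-3$.
   Context: For a partition $\pi$, $\nu(\pi,i)$ denotes the number of parts of $\pi$ congruent to $i\pmod 8$, and $\mu(\pi,i)$ denotes the number of parts of $\pi$ equal to $i$. *)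

theory Defs
  imports Main "HOL-Library.Multiset"
begin

definition partitions :: "nat \<Rightarrow> nat multiset set" where
  "partitions n = {p. (\<forall>x\<in>#p. 0 < x) \<and> sum_mset p = n}"

definition nu :: "nat multiset \<Rightarrow> nat \<Rightarrow> nat" where
  "nu p i = size (filter_mset (\<lambda>x. x mod 8 = i mod 8) p)"

definition mu :: "nat multiset \<Rightarrow> nat \<Rightarrow> nat" where
  "mu p i = count p i"

definition A_tilde_L0 :: "nat \<Rightarrow> nat \<Rightarrow> nat" where
  "A_tilde_L0 L n = card {p \<in> partitions n.
      (\<forall>x\<in>#p. (x mod 8 = 1 \<or> x mod 8 = 7) \<and> x \<le> 8 * L - 1) \<and>
      nu p 1 \<ge> nu p 7 \<and>
      (let D = int (nu p 1) - int (nu p 7) in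
         (3 dvd D \<and> 3 * int (mu p 1) \<ge> 2 * D) \<or>
         (5 dvd D \<and> \<not> 3 dvd D \<and> 5 * int (mu p 1) \<ge> 4 * D) \<or>
         (D mod 15 = (-8) mod 15 \<and> mu p 7 > 0 \<and> 5 * int (mu p 1) \<ge> 4 * D - 3))}"

definition A_L1 :: "nat \<Rightarrow> nat \<Rightarrow> nat" where
  "A_L1 L n = card {p \<in> partitions n.
      \<forall>x\<in>#p. (x mod 8 = 3 \<or> x mod 8 = 5) \<and> x \<le> 8 * L - 3}"

end

(* Flipping bit 1 of every part (8k+3 <-> 8k+1, 8k+5 <-> 8k+7) or bit 2 of every part
   (8k+3 <-> 8k+7, 8k+5 <-> 8k+1) maps multisets of parts congruent to 3, 5 mod 8 and at most
   8L - 3 bijectively to multisets of parts congruent to 1, 7 mod 8 and at most 8L - 1. It lowers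
   the size by 2m resp. 4m, where m is the number of parts landing in the class 1 minus the number
   landing in the class 7. Flip bit 1 if nu(pi,3) >= nu(pi,5) and bit 2 otherwise, so that m >= 0,
   and restore the size by adding 2m resp. 4m parts 1. This gives D = 3m with mu(pi,1) >= 2D/3,
   resp. D = 5m with mu(pi,1) >= 4D/5; if 3 divides m in the second case, seven of the new 1s are
   merged into a 7, which gives D = 5m - 8 and mu(pi,1) >= (4D - 3)/5. The residue of D mod 15
   tells the three cases apart, so the construction can be undone. *)

theory Submission
  imports Defs
begin

(* 1 is both a residue and a part size here; keep the simplifier from rewriting it to Suc 0. *)
declare One_nat_def [simp del]

lemma flip_bit_flip_bit [simp]: "flip_bit n (flip_bit n a) = a"
  by (rule bit_eqI) (auto simp: bit_flip_bit_iff)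

lemma image_mset_flip_bit_flip_bit [simp]:
  "image_mset (flip_bit n) (image_mset (flip_bit n) p) = p"
  by (simp add: multiset.map_comp comp_def)

lemma flip_bit_nat_eq: "flip_bit n (z::nat) = (if bit z n then z - 2 ^ n else z + 2 ^ n)"
proof (cases "bit z n")
  case True
  have "set_bit n (unset_bit n z) = z"
    by (rule bit_eqI) (use True in \<open>auto simp: bit_simps\<close>)
  then have "z = unset_bit n z + 2 ^ n"
    by (simp add: set_bit_eq bit_unset_bit_iff)
  then show ?thesis using True by (simp add: flip_bit_eq_if)
qed (simp add: flip_bit_eq_if set_bit_eq)

lemma flip_bit_nat_add_eq:
  "flip_bit n (z::nat) + of_bool (bit z n) * 2 ^ n = z + of_bool (\<not> bit z n) * 2 ^ n"
proof -
  have "2 ^ n \<le> z" if "bit z n"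
  proof -
    have "0 < z div 2 ^ n"
      using that by (simp add: bit_nat_def odd_pos)
    then show ?thesis by (simp add: div_greater_zero_iff)
  qed
  then show ?thesis by (simp add: flip_bit_nat_eq)
qed

lemma flip_bit_mod_power2: "n < k \<Longrightarrow> flip_bit n (z::nat) mod 2 ^ k = flip_bit n (z mod 2 ^ k)"
  using take_bit_flip_bit_eq[of k n z] by (simp add: take_bit_eq_mod)

lemma drop_bit_flip_bit_nat: "n < k \<Longrightarrow> drop_bit k (flip_bit n (z::nat)) = drop_bit k z"
  by (rule bit_eqI) (auto simp: bit_drop_bit_eq bit_flip_bit_iff)

lemma flip_bit_nat_low:
  assumes "n < k"
  shows "flip_bit n (z::nat) = 2 ^ k * (z div 2 ^ k) + flip_bit n (z mod 2 ^ k)"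
proof -
  have "flip_bit n z div 2 ^ k = z div 2 ^ k"
    using drop_bit_flip_bit_nat[OF assms] by (simp add: drop_bit_eq_div)
  then show ?thesis
    using div_mult_mod_eq[of "flip_bit n z" "2 ^ k"] flip_bit_mod_power2[OF assms] by (simp add: mult.commute)
qed

lemma flip_bit_nat_mod_8: "n < 3 \<Longrightarrow> flip_bit n (z::nat) = 8 * (z div 8) + flip_bit n (z mod 8)"
  using flip_bit_nat_low[of n 3 z] by simp

lemma sum_mset_image_flip_bit:
  "sum_mset (image_mset (flip_bit n) p) + 2 ^ n * size (filter_mset (\<lambda>z. bit z n) p)
     = sum_mset p + 2 ^ n * size (filter_mset (\<lambda>z. \<not> bit z n) p)"
proof (induction p)
  case (add z p)
  then show ?case using flip_bit_nat_add_eq[of n z] by (cases "bit z n") auto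
qed simp

lemma nu_plus [simp]: "nu (A + B) i = nu A i + nu B i"
  by (simp add: nu_def)

lemma nu_replicate_mset [simp]: "nu (replicate_mset k x) i = (if x mod 8 = i mod 8 then k else 0)"
  by (induction k) (auto simp: nu_def)

lemma nu_image_flip_bit:
  assumes "n < 3"
  shows "nu (image_mset (flip_bit n) p) i = nu p (flip_bit n (i mod 8))"
proof -
  have mod8: "flip_bit n z mod 8 = flip_bit n (z mod 8)" for z :: nat
    using flip_bit_mod_power2[OF assms, of z] by simp
  have "flip_bit n z mod 8 = i mod 8 \<longleftrightarrow> z mod 8 = flip_bit n (i mod 8) mod 8" for z
  proof -
    have "flip_bit n z mod 8 = i mod 8 \<longleftrightarrow> flip_bit n (z mod 8) = i mod 8"
      by (simp add: mod8)
    also have "\<dots> \<longleftrightarrow> z mod 8 = flip_bit n (i mod 8)"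
      by (metis flip_bit_flip_bit)
    also have "flip_bit n (i mod 8) = flip_bit n (i mod 8) mod 8"
      by (simp add: mod8)
    finally show ?thesis .
  qed
  then show ?thesis
    by (simp add: nu_def filter_mset_image_mset)
qed

lemma flip_bit_odd_residues [simp]:
  "flip_bit 1 (1::nat) = 3" "flip_bit 1 (3::nat) = 1" "flip_bit 1 (5::nat) = 7" "flip_bit 1 (7::nat) = 5"
  "flip_bit 2 (1::nat) = 5" "flip_bit 2 (3::nat) = 7" "flip_bit 2 (5::nat) = 1" "flip_bit 2 (7::nat) = 3"
  by (simp_all add: flip_bit_nat_eq bit_nat_def)

definition A_part :: "nat \<Rightarrow> nat \<Rightarrow> bool" where
  "A_part L z \<longleftrightarrow> (z mod 8 = 3 \<or> z mod 8 = 5) \<and> z \<le> 8 * L - 3"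

definition T_part :: "nat \<Rightarrow> nat \<Rightarrow> bool" where
  "T_part L z \<longleftrightarrow> (z mod 8 = 1 \<or> z mod 8 = 7) \<and> z \<le> 8 * L - 1"

lemma T_part_bit_iff:
  assumes "T_part L z" "n \<in> {1, 2}"
  shows "bit z n \<longleftrightarrow> z mod 8 = 7"
proof -
  have "z mod 8 = 1 \<or> z mod 8 = 7"
    using assms(1) by (simp add: T_part_def)
  then show ?thesis
    using assms(2) by (auto simp: bit_nat_def; presburger)
qed

lemma A_part_flip_bit:
  assumes "1 \<le> L" "n \<in> {1, 2}" "T_part L z"
  shows "A_part L (flip_bit n z)"
proof -
  have "A_part L (8 * q + flip_bit n r)" if "r = 1 \<or> r = 7" "8 * q + r \<le> 8 * L - 1" for q r
    using that assms(1,2) by (auto simp: A_part_def flip_bit_nat_eq bit_nat_def) presburger+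
  moreover have "z mod 8 = 1 \<or> z mod 8 = 7" "8 * (z div 8) + z mod 8 \<le> 8 * L - 1"
    using assms(3) by (auto simp: T_part_def)
  moreover have "flip_bit n z = 8 * (z div 8) + flip_bit n (z mod 8)"
    using assms(2) by (intro flip_bit_nat_mod_8) auto
  ultimately show ?thesis
    by metis
qed

lemma T_part_flip_bit:
  assumes "n \<in> {1, 2}" "A_part L z"
  shows "T_part L (flip_bit n z)"
proof -
  have "T_part L (8 * q + flip_bit n r)" if "r = 3 \<or> r = 5" "8 * q + r \<le> 8 * L - 3" for q r
    using that assms(1) by (auto simp: T_part_def flip_bit_nat_eq bit_nat_def) presburger+
  moreover have "z mod 8 = 3 \<or> z mod 8 = 5" "8 * (z div 8) + z mod 8 \<le> 8 * L - 3"
    using assms(2) by (auto simp: A_part_def)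
  moreover have "flip_bit n z = 8 * (z div 8) + flip_bit n (z mod 8)"
    using assms(1) by (intro flip_bit_nat_mod_8) auto
  ultimately show ?thesis
    by metis
qed

lemma sum_mset_image_flip_bit_T_parts:
  assumes "\<forall>z\<in>#r. T_part L z" "n \<in> {1, 2}"
  shows "sum_mset (image_mset (flip_bit n) r) + 2 ^ n * nu r 7 = sum_mset r + 2 ^ n * nu r 1"
proof -
  have "bit z n \<longleftrightarrow> z mod 8 = 7" "\<not> bit z n \<longleftrightarrow> z mod 8 = 1" if "z \<in># r" for z
    using T_part_bit_iff[of L z n] assms that by (auto simp: T_part_def)
  then have "filter_mset (\<lambda>z. bit z n) r = filter_mset (\<lambda>z. z mod 8 = 7 mod 8) r"
    "filter_mset (\<lambda>z. \<not> bit z n) r = filter_mset (\<lambda>z. z mod 8 = 1 mod 8) r"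
    by (auto intro: filter_mset_cong)
  then show ?thesis
    using sum_mset_image_flip_bit[of n r] by (simp add: nu_def)
qed

definition pad :: "nat \<Rightarrow> nat \<Rightarrow> nat multiset \<Rightarrow> nat multiset" where
  "pad i j r = r + replicate_mset i 1 + replicate_mset j 7"

lemma pad_simps [simp]:
  "nu (pad i j r) 1 = nu r 1 + i" "nu (pad i j r) 7 = nu r 7 + j"
  "count (pad i j r) 1 = count r 1 + i" "count (pad i j r) 7 = count r 7 + j"
  "sum_mset (pad i j r) = sum_mset r + i + 7 * j"
  by (simp_all add: pad_def)

lemma pad_diff_replicate_mset:
  assumes "i \<le> count q 1" "j \<le> count q 7"
  shows "pad i j (q - replicate_mset i 1 - replicate_mset j 7) = q"
  using assms by (simp add: pad_def multiset_eq_iff)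

lemma T_parts_pad:
  "1 \<le> L \<Longrightarrow> \<forall>z\<in>#r. T_part L z \<Longrightarrow> \<forall>z\<in>#pad i j r. T_part L z"
  by (auto simp: pad_def T_part_def)

(* The cases (i), (ii), (iii): flip bit n, and pad the result, whose 1-parts outnumber its
   7-parts by m, with i parts 1 and j parts 7. *)
definition padding_rule :: "nat \<Rightarrow> nat \<Rightarrow> nat \<Rightarrow> nat \<Rightarrow> bool" where
  "padding_rule n m i j \<longleftrightarrow>
     n = 1 \<and> i = 2 * m \<and> j = 0 \<or>
     n = 2 \<and> i = 4 * m \<and> j = 0 \<and> \<not> 3 dvd m \<or>
     n = 2 \<and> i = 4 * m - 7 \<and> j = 1 \<and> 3 dvd m \<and> 0 < m"

lemma padding_rule_D:
  assumes "padding_rule n m i j"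
  shows "n \<in> {1, 2}" "i + 7 * j = 2 ^ n * m"
  using assms unfolding padding_rule_def by (auto dest: dvd_imp_le)

lemma merged_excess:
  assumes "3 dvd (m::nat)" "0 < m"
  shows "(5 * m - 8) mod 15 = 7" "\<not> 3 dvd 5 * m - 8" "\<not> 5 dvd 5 * m - 8"
    "(4 * (5 * m - 8) - 3) div 5 = 4 * m - 7"
proof -
  obtain k where "m = 3 * k"
    using assms(1) by blast
  with assms(2) obtain t where "m = 3 * t + 3"
    by (cases k) auto
  then have m: "5 * m - 8 = 15 * t + 7" "4 * m - 7 = 12 * t + 5"
    by simp_all
  have "\<not> 3 dvd 15 * t + 7" "\<not> 5 dvd 15 * t + 7"
    by presburger+
  then show "(5 * m - 8) mod 15 = 7" "\<not> 3 dvd 5 * m - 8" "\<not> 5 dvd 5 * m - 8"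
    "(4 * (5 * m - 8) - 3) div 5 = 4 * m - 7"
    unfolding m by simp_all
qed

lemma merged_excess_inverse:
  fixes D c :: nat
  assumes "D mod 15 = 7" "4 * D \<le> 5 * c + 3"
  obtains m where "D + 8 = 5 * m" "3 dvd m" "0 < m" "4 * m - 7 \<le> c"
proof -
  have D: "D = 15 * (D div 15) + 7"
    using assms(1) div_mult_mod_eq[of D 15] by simp
  show thesis
    by (rule that[of "3 * (D div 15) + 3"]) (use D assms(2) in auto)
qed

lemma padding_rule_exists:
  obtains n m i j where "padding_rule n m i j"
    "nu (image_mset (flip_bit n) p) 1 = nu (image_mset (flip_bit n) p) 7 + m"
proof (cases "nu p 5 \<le> nu p 3")
  case True
  have "nu (image_mset (flip_bit 1) p) 1 = nu p 3" "nu (image_mset (flip_bit 1) p) 7 = nu p 5"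
    by (simp_all add: nu_image_flip_bit)
  then show thesis
    using that[of 1 "nu p 3 - nu p 5" "2 * (nu p 3 - nu p 5)" 0] True by (simp add: padding_rule_def)
next
  case False
  define m where "m = nu p 5 - nu p 3"
  have "nu (image_mset (flip_bit 2) p) 1 = nu p 3 + m" "nu (image_mset (flip_bit 2) p) 7 = nu p 3"
    using False by (simp_all add: nu_image_flip_bit m_def)
  moreover have "padding_rule 2 m (4 * m - 7) 1 \<or> padding_rule 2 m (4 * m) 0"
    using False by (auto simp: padding_rule_def m_def)
  ultimately show thesis
    using that by auto
qed

lemma sum_mset_pad_flip_bit:
  assumes "\<forall>z\<in>#r. T_part L z" "padding_rule n m i j" "nu r 1 = nu r 7 + m"
  shows "sum_mset (pad i j r) = sum_mset (image_mset (flip_bit n) r)"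
  using sum_mset_image_flip_bit_T_parts[OF assms(1) padding_rule_D(1)[OF assms(2)]]
    padding_rule_D(2)[OF assms(2)] assms(3)
  by (simp add: algebra_simps)

definition T_condition :: "nat multiset \<Rightarrow> bool" where
  "T_condition q \<longleftrightarrow> nu q 7 \<le> nu q 1 \<and>
     (let D = nu q 1 - nu q 7 in
        3 dvd D \<and> 2 * D \<le> 3 * count q 1 \<or>
        5 dvd D \<and> \<not> 3 dvd D \<and> 4 * D \<le> 5 * count q 1 \<or>
        D mod 15 = 7 \<and> 0 < count q 7 \<and> 4 * D \<le> 5 * count q 1 + 3)"

definition to_T :: "nat multiset \<Rightarrow> nat multiset" where
  "to_T p =
     (if nu p 5 \<le> nu p 3 then pad (2 * (nu p 3 - nu p 5)) 0 (image_mset (flip_bit 1) p)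
      else let m = nu p 5 - nu p 3 in
        if 3 dvd m then pad (4 * m - 7) 1 (image_mset (flip_bit 2) p)
        else pad (4 * m) 0 (image_mset (flip_bit 2) p))"

definition to_A :: "nat multiset \<Rightarrow> nat multiset" where
  "to_A q =
     (let D = nu q 1 - nu q 7 in
        if 3 dvd D then image_mset (flip_bit 1) (q - replicate_mset (2 * (D div 3)) 1)
        else if 5 dvd D then image_mset (flip_bit 2) (q - replicate_mset (4 * (D div 5)) 1)
        else image_mset (flip_bit 2) (q - replicate_mset ((4 * D - 3) div 5) 1 - {#7#}))"

lemma to_T_flip_bit_pad:
  assumes "padding_rule n m i j" "nu r 1 = nu r 7 + m"
  shows "to_T (image_mset (flip_bit n) r) = pad i j r"
proof -
  have "n < 3"
    using padding_rule_D(1)[OF assms(1)] by auto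
  then have nu35: "nu (image_mset (flip_bit n) r) 3 = nu r (flip_bit n 3)"
    "nu (image_mset (flip_bit n) r) 5 = nu r (flip_bit n 5)"
    by (simp_all add: nu_image_flip_bit)
  from assms(1) show ?thesis
    unfolding padding_rule_def using nu35 assms(2)
    by (elim disjE) (auto simp: to_T_def)
qed

lemma to_A_pad:
  assumes "padding_rule n m i j" "nu r 1 = nu r 7 + m"
  shows "to_A (pad i j r) = image_mset (flip_bit n) r \<and> T_condition (pad i j r)"
proof -
  let ?q = "pad i j r"
  from assms(1) consider
      (flip1) "n = 1" "i = 2 * m" "j = 0"
    | (flip2) "n = 2" "i = 4 * m" "j = 0" "\<not> 3 dvd m"
    | (flip2_merged) "n = 2" "i = 4 * m - 7" "j = 1" "3 dvd m" "0 < m"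
    unfolding padding_rule_def by blast
  then show ?thesis
  proof cases
    case flip1
    then have D: "nu ?q 1 - nu ?q 7 = 3 * m" and "nu ?q 7 \<le> nu ?q 1"
      using assms(2) by simp_all
    then show ?thesis
      unfolding to_A_def T_condition_def Let_def D using flip1 by (simp add: pad_def)
  next
    case flip2
    then have D: "nu ?q 1 - nu ?q 7 = 5 * m" and "nu ?q 7 \<le> nu ?q 1" "\<not> 3 dvd 5 * m"
      using assms(2) by simp_all presburger
    then show ?thesis
      unfolding to_A_def T_condition_def Let_def D using flip2 by (simp add: pad_def)
  next
    case flip2_merged
    then have D: "nu ?q 1 - nu ?q 7 = 5 * m - 8" and "nu ?q 7 \<le> nu ?q 1" "3 \<le> m"
      using assms(2) by (auto dest: dvd_imp_le)
    moreover have "replicate_mset 1 (7::nat) = {#7#}"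
      by (simp add: One_nat_def)
    moreover have "4 * (5 * m - 8) \<le> 5 * (count r 1 + 4 * m - 7) + 3"
      using \<open>3 \<le> m\<close> by linarith
    ultimately show ?thesis
      unfolding to_A_def T_condition_def Let_def D using flip2_merged merged_excess[of m]
      by (auto simp: pad_def)
  qed
qed

lemma T_condition_padding_rule:
  assumes "T_condition q"
  obtains n m i j where "padding_rule n m i j" "i \<le> count q 1" "j \<le> count q 7"
    "nu q 1 + j = nu q 7 + m + i"
proof -
  define D where "D = nu q 1 - nu q 7"
  have D: "nu q 1 = nu q 7 + D"
    using assms by (simp add: T_condition_def D_def)
  consider "3 dvd D" "2 * D \<le> 3 * count q 1"
    | "5 dvd D" "\<not> 3 dvd D" "4 * D \<le> 5 * count q 1"
    | "D mod 15 = 7" "0 < count q 7" "4 * D \<le> 5 * count q 1 + 3"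
    using assms unfolding T_condition_def D_def[symmetric] Let_def by auto
  then show thesis
  proof cases
    case 1
    then show thesis
      using that[of 1 "D div 3" "2 * (D div 3)" 0] D by (auto simp: padding_rule_def)
  next
    case 2
    then have "\<not> 3 dvd D div 5"
      by presburger
    with 2 show thesis
      using that[of 2 "D div 5" "4 * (D div 5)" 0] D by (auto simp: padding_rule_def)
  next
    case 3
    then obtain m where "D + 8 = 5 * m" "3 dvd m" "0 < m" "4 * m - 7 \<le> count q 1"
      using merged_excess_inverse by blast
    moreover have "3 \<le> m"
      using calculation by (auto dest: dvd_imp_le)
    ultimately show thesis
      using that[of 2 m "4 * m - 7" 1] D \<open>0 < count q 7\<close> by (auto simp: padding_rule_def)
  qed
qed

lemma to_T_properties:
  assumes "1 \<le> L" "\<forall>z\<in>#p. A_part L z"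
  shows "(\<forall>z\<in>#to_T p. T_part L z) \<and> sum_mset (to_T p) = sum_mset p \<and> T_condition (to_T p)
    \<and> to_A (to_T p) = p"
proof -
  obtain n m i j where rule: "padding_rule n m i j"
    and m: "nu (image_mset (flip_bit n) p) 1 = nu (image_mset (flip_bit n) p) 7 + m"
    by (rule padding_rule_exists)
  define r where "r = image_mset (flip_bit n) p"
  have p: "p = image_mset (flip_bit n) r"
    by (simp add: r_def)
  have r_parts: "\<forall>z\<in>#r. T_part L z"
    using assms(2) T_part_flip_bit[OF padding_rule_D(1)[OF rule]] by (auto simp: r_def)
  have m': "nu r 1 = nu r 7 + m"
    using m by (simp add: r_def)
  show ?thesis
    using to_T_flip_bit_pad[OF rule m'] to_A_pad[OF rule m'] T_parts_pad[OF assms(1) r_parts]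
      sum_mset_pad_flip_bit[OF r_parts rule m'] p
    by simp
qed

lemma to_A_properties:
  assumes "1 \<le> L" "\<forall>z\<in>#q. T_part L z" "T_condition q"
  shows "(\<forall>z\<in>#to_A q. A_part L z) \<and> sum_mset (to_A q) = sum_mset q \<and> to_T (to_A q) = q"
proof -
  obtain n m i j where rule: "padding_rule n m i j"
    and le: "i \<le> count q 1" "j \<le> count q 7" and D: "nu q 1 + j = nu q 7 + m + i"
    using T_condition_padding_rule[OF assms(3)] by blast
  define r where "r = q - replicate_mset i 1 - replicate_mset j 7"
  have q: "q = pad i j r"
    using pad_diff_replicate_mset[OF le] by (simp add: r_def)
  have r_parts: "\<forall>z\<in>#r. T_part L z"
    using assms(2) by (auto simp: r_def dest: in_diffD)
  have m: "nu r 1 = nu r 7 + m"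
    using D by (simp add: q)
  show ?thesis
    using to_A_pad[OF rule m] to_T_flip_bit_pad[OF rule m] sum_mset_pad_flip_bit[OF r_parts rule m]
      A_part_flip_bit[OF assms(1) padding_rule_D(1)[OF rule]] r_parts q
    by auto
qed

lemma T_condition_iff:
  "(nu q 7 \<le> nu q 1 \<and>
      (let D = int (nu q 1) - int (nu q 7) in
         (3 dvd D \<and> 3 * int (mu q 1) \<ge> 2 * D) \<or>
         (5 dvd D \<and> \<not> 3 dvd D \<and> 5 * int (mu q 1) \<ge> 4 * D) \<or>
         (D mod 15 = (-8) mod 15 \<and> mu q 7 > 0 \<and> 5 * int (mu q 1) \<ge> 4 * D - 3)))
   \<longleftrightarrow> T_condition q"
proof (cases "nu q 7 \<le> nu q 1")
  case True
  define D where "D = nu q 1 - nu q 7"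
  define c where "c = count q 1"
  have "int (nu q 1) - int (nu q 7) = int D"
    using True by (simp add: D_def)
  moreover have "(3::int) dvd int D \<longleftrightarrow> 3 dvd D" "(5::int) dvd int D \<longleftrightarrow> 5 dvd D"
    by (metis int_dvd_int_iff of_nat_numeral)+
  moreover have "int D mod 15 = int (D mod 15)"
    by (simp add: of_nat_mod)
  moreover have "2 * int D \<le> 3 * int c \<longleftrightarrow> 2 * D \<le> 3 * c"
    "4 * int D \<le> 5 * int c \<longleftrightarrow> 4 * D \<le> 5 * c"
    "4 * int D - 3 \<le> 5 * int c \<longleftrightarrow> 4 * D \<le> 5 * c + 3"
    by linarith+
  ultimately show ?thesis
    using True unfolding T_condition_def mu_def Let_def D_def[symmetric] c_def[symmetric] by simp
qed (simp add: T_condition_def)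

lemma A_L1_eq_card: "A_L1 L n = card {p. (\<forall>z\<in>#p. A_part L z) \<and> sum_mset p = n}"
  unfolding A_L1_def partitions_def A_part_def
  by (intro arg_cong[where f = card] Collect_cong) (auto intro!: gr0I)

lemma A_tilde_L0_eq_card:
  "A_tilde_L0 L n = card {q. (\<forall>z\<in>#q. T_part L z) \<and> sum_mset q = n \<and> T_condition q}"
  unfolding A_tilde_L0_def partitions_def T_condition_iff T_part_def
  by (intro arg_cong[where f = card] Collect_cong) (auto intro!: gr0I)

theorem theorem3:
  fixes L n :: nat
  assumes "L \<ge> 1"
  shows "A_tilde_L0 L n = A_L1 L n"
proof -
  have "bij_betw to_T {p. (\<forall>z\<in>#p. A_part L z) \<and> sum_mset p = n}
      {q. (\<forall>z\<in>#q. T_part L z) \<and> sum_mset q = n \<and> T_condition q}"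
    by (rule bij_betw_byWitness[where f' = to_A])
      (use to_T_properties[OF assms] to_A_properties[OF assms] in auto)
  then show ?thesis
    unfolding A_L1_eq_card A_tilde_L0_eq_card by (simp add: bij_betw_same_card)
qed

end
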